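(* Let $m\ge 1$ and let $G=\overline{B(K_m,K_3)}$ be a graph whose vertex set is the disjoint union of a clique $K_m$ and a clique $K_3$ with vertices $1,2,3$, with arbitrary edges between $V(K_m)$ and $\{1,2,3\}$, subject to the conditions that no vertex of $K_m$ is adjacent to all three of $1,2,3$ (i.e. $N_{123}=\emptyset$) and every vertex of $K_m$ is adjacent to at least one of $1,2,3$ (i.e. $N_{\overline{1}\overline{2}\overline{3}}=\emptyset$). Then $G$ is word-representable.
   Context: A graph $G=(V,E)$ is word-representable if there exists a word $w$ over the alphabet $V$, containing every letter of $V$ at least once, such that for all distinct $x,y\in V$, the letters $x$ and $y$ alternate in $w$ (i.e., the subword of $w$ obtained by deleting all letters other than $x,y$ has no two equal consecutive letters) if and only if $xy\in E$. For $i\in\{1,2,3\}$, $N_i$ is the set of neighbours of $i$; $N_{123}$ is the set of $v\in V(K_m)$ with $v\in N_1\cap N_2\cap N_3$, and $N_{\overline{1}\overline{2}\overline{3}}$ the set of $v\in V(K_m)$ with $v\notin N_1\cup N_2\cup N_3$. *)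

theory Defs
  imports Main
begin

definition alternate :: "'a list \<Rightarrow> 'a \<Rightarrow> 'a \<Rightarrow> bool" where
  "alternate w x y \<longleftrightarrow> successively (\<noteq>) (filter (\<lambda>z. z = x \<or> z = y) w)"

definition word_representable :: "'a set \<Rightarrow> ('a \<Rightarrow> 'a \<Rightarrow> bool) \<Rightarrow> bool" where
  "word_representable V E \<longleftrightarrow>
     (\<exists>w. set w = V \<and> (\<forall>x\<in>V. \<forall>y\<in>V. x \<noteq> y \<longrightarrow> (alternate w x y \<longleftrightarrow> E x y)))"

end

theory Submission
  imports Defs
begin

text \<open>Classify the vertices of \<open>K\<^sub>m\<close> by their neighbourhood in the triangle
  \<open>{1,2,3}\<close>; the hypotheses leave exactly six classes, each a clique. Together with
  the three triangle vertices these form nine classes, and two vertices in different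
  classes are adjacent iff their classes are. Replacing every letter of a word by a
  fixed permutation of its class preserves alternation between different classes and
  makes letters of one class alternate, so it suffices to represent the nine-vertex
  quotient graph, which an explicit word of length 27 does.\<close>

lemma filter_eq_or_distinct:
  "distinct xs \<Longrightarrow> y \<notin> set xs \<Longrightarrow>
     filter (\<lambda>z. z = x \<or> z = y) xs = (if x \<in> set xs then [x] else [])"
  by (induction xs) (auto simp: filter_empty_conv)

lemma distinct_doubleton_cases:
  assumes "distinct p" "set p = {x, y}" "x \<noteq> y"
  shows "p = [x, y] \<or> p = [y, x]"
proof -
  have "length p = 2" using distinct_card[OF assms(1)] assms(2,3) by simp
  then obtain a b where "p = [a, b]" by (metis length_0_conv length_Suc_conv numeral_2_eq_2)
  then show ?thesis using assms by (auto simp: doubleton_eq_iff)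
qed

lemma successively_neq_concat_replicate:
  "x \<noteq> y \<Longrightarrow> successively (\<noteq>) (concat (replicate n [x, y]))"
proof (induction n)
  case (Suc n)
  then show ?case by (cases n) auto
qed simp

lemma alternate_concat_map_diff:
  fixes f :: "'b \<Rightarrow> 'a list"
  assumes distinct: "\<And>u. distinct (f u)"
    and disjoint: "\<And>u v. u \<noteq> v \<Longrightarrow> set (f u) \<inter> set (f v) = {}"
    and "x \<in> set (f t)" "y \<in> set (f s)" "t \<noteq> s"
  shows "alternate (concat (map f w)) x y \<longleftrightarrow> alternate w t s"
proof -
  define g where "g u = (if u = t then x else y)" for u
  have block: "filter (\<lambda>z. z = x \<or> z = y) (f u) = (if u = t then [x] else if u = s then [y] else [])"
    for u
  proof -
    have "x \<in> set (f u) \<longleftrightarrow> u = t" "y \<in> set (f u) \<longleftrightarrow> u = s"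
      using disjoint assms(3,4) by blast+
    moreover have "filter (\<lambda>z. z = x \<or> z = y) (f u) = filter (\<lambda>z. z = y \<or> z = x) (f u)"
      by meson
    ultimately show ?thesis
      using filter_eq_or_distinct[OF distinct, where x = y and y = x]
        filter_eq_or_distinct[OF distinct, where x = x and y = y]
        \<open>t \<noteq> s\<close> by (auto simp: filter_empty_conv)
  qed
  have "filter (\<lambda>z. z = x \<or> z = y) (concat (map f w)) = map g (filter (\<lambda>u. u = t \<or> u = s) w)"
    by (induction w) (auto simp: block g_def filter_concat \<open>t \<noteq> s\<close>)
  moreover have "x \<noteq> y" using disjoint[OF \<open>t \<noteq> s\<close>] assms(3,4) by blast
  then have "successively (\<noteq>) (map g l) \<longleftrightarrow> successively (\<noteq>) l" if "set l \<subseteq> {t, s}" for l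
    unfolding successively_map using that \<open>t \<noteq> s\<close>
    by (intro successively_cong) (auto simp: g_def)
  moreover have "set (filter (\<lambda>u. u = t \<or> u = s) w) \<subseteq> {t, s}" by auto
  ultimately show ?thesis
    unfolding alternate_def by simp
qed

lemma alternate_concat_map_same:
  fixes f :: "'b \<Rightarrow> 'a list"
  assumes distinct: "\<And>u. distinct (f u)"
    and disjoint: "\<And>u v. u \<noteq> v \<Longrightarrow> set (f u) \<inter> set (f v) = {}"
    and "x \<in> set (f t)" "y \<in> set (f t)" "x \<noteq> y"
  shows "alternate (concat (map f w)) x y"
proof -
  define p where "p = filter (\<lambda>z. z = x \<or> z = y) (f t)"
  have "filter (\<lambda>z. z = x \<or> z = y) (f u) = (if u = t then p else [])" for u
    using disjoint[of u t] assms(3,4) by (auto simp: p_def filter_empty_conv)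
  then have "filter (\<lambda>z. z = x \<or> z = y) (concat (map f w))
      = concat (replicate (length (filter (\<lambda>u. u = t) w)) p)"
    by (induction w) (auto simp: filter_concat)
  moreover have "p = [x, y] \<or> p = [y, x]"
    using distinct_doubleton_cases[of p x y] distinct[of t] assms(3-5) by (auto simp: p_def)
  ultimately show ?thesis
    unfolding alternate_def using successively_neq_concat_replicate \<open>x \<noteq> y\<close>
    by (metis (no_types))
qed

lemma word_representable_blow_up_cliques:
  fixes cls :: "'a \<Rightarrow> 'b"
  assumes "word_representable T H" and "finite V" and "cls ` V \<subseteq> T"
    and same: "\<And>x y. x \<in> V \<Longrightarrow> y \<in> V \<Longrightarrow> x \<noteq> y \<Longrightarrow> cls x = cls y \<Longrightarrow> E x y"
    and diff: "\<And>x y. x \<in> V \<Longrightarrow> y \<in> V \<Longrightarrow> cls x \<noteq> cls y \<Longrightarrow> E x y \<longleftrightarrow> H (cls x) (cls y)"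
  shows "word_representable V E"
proof -
  obtain w where w: "set w = T" "\<And>t s. t \<in> T \<Longrightarrow> s \<in> T \<Longrightarrow> t \<noteq> s \<Longrightarrow> alternate w t s \<longleftrightarrow> H t s"
    using assms(1) by (auto simp: word_representable_def)
  define f where "f t = (SOME xs. distinct xs \<and> set xs = {x \<in> V. cls x = t})" for t
  have f: "distinct (f t) \<and> set (f t) = {x \<in> V. cls x = t}" for t
  proof -
    have "\<exists>xs. distinct xs \<and> set xs = {x \<in> V. cls x = t}"
      using finite_distinct_list[of "{x \<in> V. cls x = t}"] \<open>finite V\<close> by auto
    then show ?thesis unfolding f_def by (rule someI_ex)
  qed
  then have disjoint: "set (f u) \<inter> set (f v) = {}" if "u \<noteq> v" for u v
    using that by auto
  have distinct: "distinct (f u)" for u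
    using f by blast
  show ?thesis
    unfolding word_representable_def
  proof (intro exI conjI ballI impI)
    show "set (concat (map f w)) = V" using f w(1) assms(3) by auto
    fix x y assume "x \<in> V" "y \<in> V" "x \<noteq> y"
    then have x: "x \<in> set (f (cls x))" and y: "y \<in> set (f (cls y))"
      using f by auto
    show "alternate (concat (map f w)) x y \<longleftrightarrow> E x y"
    proof (cases "cls x = cls y")
      case True
      then show ?thesis
        using alternate_concat_map_same[where f = f, OF distinct disjoint x y[folded True] \<open>x \<noteq> y\<close>] same[of x y]
          \<open>x \<in> V\<close> \<open>y \<in> V\<close> \<open>x \<noteq> y\<close> by simp
    next
      case False
      then show ?thesis
        using alternate_concat_map_diff[where f = f, OF distinct disjoint x y False] diff[of x y]
          w(2)[of "cls x" "cls y"] assms(3) \<open>x \<in> V\<close> \<open>y \<in> V\<close> by auto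
    qed
  qed
qed

text \<open>The classes of the quotient graph: \<open>Nij\<close> is the set of vertices of \<open>K\<^sub>m\<close>
  adjacent exactly to \<open>i\<close> and \<open>j\<close> among the triangle vertices, and \<open>Ti\<close> is
  the class of the triangle vertex \<open>i\<close> itself.\<close>
datatype vtype = N1 | N2 | N3 | N12 | N13 | N23 | T1 | T2 | T3

fun in_clique :: "vtype \<Rightarrow> bool" where
  "in_clique T1 = False" | "in_clique T2 = False" | "in_clique T3 = False" | "in_clique _ = True"

fun triangle_pattern :: "vtype \<Rightarrow> bool \<times> bool \<times> bool" where
  "triangle_pattern N1 = (True, False, False)"
| "triangle_pattern N2 = (False, True, False)"
| "triangle_pattern N3 = (False, False, True)"
| "triangle_pattern N12 = (True, True, False)"
| "triangle_pattern N13 = (True, False, True)"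
| "triangle_pattern N23 = (False, True, True)"
| "triangle_pattern _ = (False, False, False)"

text \<open>The two patterns excluded by the hypotheses are mapped to an arbitrary class.\<close>
fun pattern_class :: "bool \<times> bool \<times> bool \<Rightarrow> vtype" where
  "pattern_class (True, False, False) = N1"
| "pattern_class (False, True, False) = N2"
| "pattern_class (False, False, True) = N3"
| "pattern_class (True, True, False) = N12"
| "pattern_class (True, False, True) = N13"
| "pattern_class (False, True, True) = N23"
| "pattern_class _ = N1"

lemma pattern_class:
  "p \<noteq> (False, False, False) \<Longrightarrow> p \<noteq> (True, True, True) \<Longrightarrow>
     in_clique (pattern_class p) \<and> triangle_pattern (pattern_class p) = p"
  by (cases p rule: pattern_class.cases) auto

fun pattern_adj :: "vtype \<Rightarrow> vtype \<Rightarrow> bool" where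
  "pattern_adj t T1 = fst (triangle_pattern t)"
| "pattern_adj t T2 = fst (snd (triangle_pattern t))"
| "pattern_adj t T3 = snd (snd (triangle_pattern t))"
| "pattern_adj t _ = True"

lemma pattern_adj_in_clique: "in_clique s \<Longrightarrow> pattern_adj t s"
  by (cases s) auto

definition quotient_adj :: "vtype \<Rightarrow> vtype \<Rightarrow> bool" where
  "quotient_adj t s \<longleftrightarrow> (in_clique t \<longrightarrow> pattern_adj t s) \<and> (in_clique s \<longrightarrow> pattern_adj s t)"

lemma word_representable_quotient: "word_representable UNIV quotient_adj"
proof -
  define w where "w = [N1, N12, N2, N23, N3, T1, N13, N1, T2, N12, N2, T3, N23, N3, T1, N13, N1,
    T2, N12, T3, T1, N2, N23, T2, N3, N13, T3]"
  have "set w = UNIV"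
    by (auto simp: w_def intro: vtype.exhaust)
  moreover have "alternate w t s \<longleftrightarrow> quotient_adj t s" if "t \<noteq> s" for t s
    using that by (cases t; cases s) (simp_all add: w_def alternate_def quotient_adj_def)
  ultimately show ?thesis
    unfolding word_representable_def by blast
qed

theorem mainTheorem9:
  fixes K :: "'a set" and v1 v2 v3 :: 'a and E :: "'a \<Rightarrow> 'a \<Rightarrow> bool" and m :: nat
  assumes "finite K" and "card K = m" and "m \<ge> 1"
    and "v1 \<noteq> v2" and "v1 \<noteq> v3" and "v2 \<noteq> v3"
    and "v1 \<notin> K" and "v2 \<notin> K" and "v3 \<notin> K"
    and "\<And>x y. E x y \<longleftrightarrow> E y x"
    and "\<And>x. \<not> E x x"
    and "\<And>x y. x \<in> K \<Longrightarrow> y \<in> K \<Longrightarrow> x \<noteq> y \<Longrightarrow> E x y"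
    and "E v1 v2" and "E v1 v3" and "E v2 v3"
    and "\<And>v. v \<in> K \<Longrightarrow> \<not> (E v v1 \<and> E v v2 \<and> E v v3)"
    and "\<And>v. v \<in> K \<Longrightarrow> E v v1 \<or> E v v2 \<or> E v v3"
  shows "word_representable (K \<union> {v1, v2, v3}) E"
proof -
  let ?V = "K \<union> {v1, v2, v3}"
  define cls where "cls x = (if x = v1 then T1 else if x = v2 then T2 else if x = v3 then T3
    else pattern_class (E x v1, E x v2, E x v3))" for x
  have cls_clique: "in_clique (cls x) \<and> triangle_pattern (cls x) = (E x v1, E x v2, E x v3)"
    if "x \<in> K" for x
    using pattern_class[of "(E x v1, E x v2, E x v3)"] assms(7-9,16,17) that
    by (auto simp: cls_def)
  have cls_triangle: "cls v1 = T1" "cls v2 = T2" "cls v3 = T3"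
    using assms(4-6) by (auto simp: cls_def)
  show ?thesis
  proof (rule word_representable_blow_up_cliques[OF word_representable_quotient])
    show "finite ?V" using assms(1) by simp
  next
    fix x y assume "x \<in> ?V" "y \<in> ?V" "x \<noteq> y" "cls x = cls y"
    then show "E x y"
      using cls_clique[of x] cls_clique[of y] cls_triangle assms(12) by auto
  next
    fix x y assume "x \<in> ?V" "y \<in> ?V" "cls x \<noteq> cls y"
    then show "E x y \<longleftrightarrow> quotient_adj (cls x) (cls y)"
      using cls_clique[of x] cls_clique[of y] cls_triangle assms(10-15)
      by (cases "x = y") (auto simp: quotient_adj_def pattern_adj_in_clique)
  qed simp
qed

end
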